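(* In the mechanism $\mathbb{M}_{\text{1-supply}}$ on a unit-supply two-sided market, if every seller $j\in L$ receives and accepts an offer (i.e. puts her item into the market) with probability exactly $1/2$, then $$2\,\mathrm{ALG}^S\ \ge\ \sum_{j=1}^k\mathbb{E}[w_j]\ \ge\ \mathrm{OPT}^S.$$
   Context: Unit-supply two-sided market: buyers $[n]$, sellers $[k]$, seller $j$ owns only item $j$. Buyer valuations $v_i$ are monotone normalized XOS functions on $2^{[k]}$ drawn independently from public distributions $G_i$; seller values $w_j\ge0$ drawn independently from public distributions $F_j$. For XOS $v$ and $T\subseteq[k]$, $a(v,T,\cdot)$ is a fixed additive function with $a(v,T,T)=v(T)$, $a(v,T,S)\le v(S)$. $\mathbb{A}$ maps buyer profiles $\mathbf v$ to allocations $X^{\mathbb A}(\mathbf v)$ of items to buyers. $\mathrm{SW}^B_j(\mathbf v)=a(v_i,X^{\mathbb A}_i(\mathbf v),\{j\})$ if $j\in X^{\mathbb A}_i(\mathbf v)$, else $0$. $L=\{j:\mathbb{E}[\mathrm{SW}^B_j(\mathbf v)]\ge4\mathbb{E}[w_j]\}$, $p_j=\frac12\mathbb{E}[\mathrm{SW}^B_j(\mathbf v)]$ for $j\in L$. $\mathbb{M}_{\text{1-supply}}$: for each $j\in L$, with probability $q_j=1/(2\Pr[w_j\le p_j])$ offer seller $j$ payment $p_j$; she accepts iff $w_j\le p_j$; $\Lambda_1$ = accepted items. Then buyers $i=1,\dots,n$ in turn pick a utility-maximizing bundle $B_i\subseteq\Lambda_i$ at prices $p_j$, pay $\sum_{j\in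 B_i}p_j$, and $\Lambda_{i+1}=\Lambda_i\setminus B_i$; sellers of bought items receive $p_j$; unbought items stay with their sellers. $\mathrm{ALG}^S=\mathbb{E}[\sum_j w_j\mathbb{I}(\text{item } j\text{ stays with seller }j)]$ in the mechanism's outcome. $\mathrm{OPT}^S$ is the expected sellers' part $\sum_j w_j\mathbb{I}(j\text{ unallocated to buyers})$ of the welfare of a welfare-maximizing allocation (chosen for each valuation profile). *)

theory Defs
  imports "HOL-Probability.Probability"
begin

type_synonym valuation = "nat set \<Rightarrow> real"

definition xos :: "nat \<Rightarrow> valuation \<Rightarrow> bool" where
  "xos k v \<longleftrightarrow> (\<exists>W :: (nat \<Rightarrow> real) set. finite W \<and> W \<noteq> {} \<and>
      (\<forall>f\<in>W. \<forall>j. 0 \<le> f j) \<and>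
      (\<forall>S \<subseteq> {..<k}. v S = Max ((\<lambda>f. \<Sum>j\<in>S. f j) ` W)))"

definition is_alloc :: "nat \<Rightarrow> nat \<Rightarrow> (nat \<Rightarrow> nat set) \<Rightarrow> bool" where
  "is_alloc n k X \<longleftrightarrow> (\<forall>i<n. X i \<subseteq> {..<k}) \<and>
      (\<forall>i<n. \<forall>i'<n. i \<noteq> i' \<longrightarrow> X i \<inter> X i' = {})"

definition welfare :: "nat \<Rightarrow> nat \<Rightarrow> (nat \<Rightarrow> valuation) \<Rightarrow> (nat \<Rightarrow> real) \<Rightarrow> (nat \<Rightarrow> nat set) \<Rightarrow> real" where
  "welfare n k vs ws X = (\<Sum>i<n. vs i (X i)) + (\<Sum>j\<in>{..<k} - (\<Union>i<n. X i). ws j)"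

definition opt_alloc :: "nat \<Rightarrow> nat \<Rightarrow> (nat \<Rightarrow> valuation) \<Rightarrow> (nat \<Rightarrow> real) \<Rightarrow> (nat \<Rightarrow> nat set) \<Rightarrow> bool" where
  "opt_alloc n k vs ws X \<longleftrightarrow> is_alloc n k X \<and>
      (\<forall>Y. is_alloc n k Y \<longrightarrow> welfare n k vs ws Y \<le> welfare n k vs ws X)"

text \<open>Buyer-side welfare contributed by item j under the allocation of algorithm A.\<close>
definition SWB :: "nat \<Rightarrow> (valuation \<Rightarrow> nat set \<Rightarrow> nat set \<Rightarrow> real)
    \<Rightarrow> ((nat \<Rightarrow> valuation) \<Rightarrow> nat \<Rightarrow> nat set) \<Rightarrow> (nat \<Rightarrow> valuation) \<Rightarrow> nat \<Rightarrow> real" where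
  "SWB n a A vs j = (\<Sum>i<n. if j \<in> A vs i then a (vs i) (A vs i) {j} else 0)"

definition ESWB :: "nat \<Rightarrow> (nat \<Rightarrow> valuation measure) \<Rightarrow> (valuation \<Rightarrow> nat set \<Rightarrow> nat set \<Rightarrow> real)
    \<Rightarrow> ((nat \<Rightarrow> valuation) \<Rightarrow> nat \<Rightarrow> nat set) \<Rightarrow> nat \<Rightarrow> real" where
  "ESWB n G a A j = integral\<^sup>L (PiM {..<n} G) (\<lambda>vs. SWB n a A vs j)"

definition Lset :: "nat \<Rightarrow> nat \<Rightarrow> (nat \<Rightarrow> valuation measure) \<Rightarrow> (nat \<Rightarrow> real measure)
    \<Rightarrow> (valuation \<Rightarrow> nat set \<Rightarrow> nat set \<Rightarrow> real) \<Rightarrow> ((nat \<Rightarrow> valuation) \<Rightarrow> nat \<Rightarrow> nat set) \<Rightarrow> nat set" where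
  "Lset n k G F a A = {j \<in> {..<k}. ESWB n G a A j \<ge> 4 * integral\<^sup>L (F j) (\<lambda>x. x)}"

definition price :: "nat \<Rightarrow> (nat \<Rightarrow> valuation measure) \<Rightarrow> (valuation \<Rightarrow> nat set \<Rightarrow> nat set \<Rightarrow> real)
    \<Rightarrow> ((nat \<Rightarrow> valuation) \<Rightarrow> nat \<Rightarrow> nat set) \<Rightarrow> nat \<Rightarrow> real" where
  "price n G a A j = ESWB n G a A j / 2"

definition offer_prob :: "nat \<Rightarrow> (nat \<Rightarrow> valuation measure) \<Rightarrow> (nat \<Rightarrow> real measure)
    \<Rightarrow> (valuation \<Rightarrow> nat set \<Rightarrow> nat set \<Rightarrow> real) \<Rightarrow> ((nat \<Rightarrow> valuation) \<Rightarrow> nat \<Rightarrow> nat set) \<Rightarrow> nat \<Rightarrow> real" where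
  "offer_prob n G F a A j = 1 / (2 * measure (F j) {x \<in> space (F j). x \<le> price n G a A j})"

text \<open>Probability space of the mechanism: buyer valuations, seller values, offer coins
  (coin j = True means seller j receives an offer), all independent.\<close>
definition mech_space :: "nat \<Rightarrow> nat \<Rightarrow> (nat \<Rightarrow> valuation measure) \<Rightarrow> (nat \<Rightarrow> real measure)
    \<Rightarrow> (valuation \<Rightarrow> nat set \<Rightarrow> nat set \<Rightarrow> real) \<Rightarrow> ((nat \<Rightarrow> valuation) \<Rightarrow> nat \<Rightarrow> nat set)
    \<Rightarrow> ((nat \<Rightarrow> valuation) \<times> (nat \<Rightarrow> real) \<times> (nat \<Rightarrow> bool)) measure" where
  "mech_space n k G F a A =
     PiM {..<n} G \<Otimes>\<^sub>M (PiM {..<k} F \<Otimes>\<^sub>M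
       PiM {..<k} (\<lambda>j. measure_pmf (bernoulli_pmf (offer_prob n G F a A j))))"

text \<open>Items still available before buyer i moves (Lambda_{i+1}); buyer i picks
  sel i (v_i) Lambda.\<close>
primrec remaining :: "(nat \<Rightarrow> valuation \<Rightarrow> nat set \<Rightarrow> nat set) \<Rightarrow> (nat \<Rightarrow> valuation)
    \<Rightarrow> nat set \<Rightarrow> nat \<Rightarrow> nat set" where
  "remaining sel vs Lam1 0 = Lam1"
| "remaining sel vs Lam1 (Suc i) = remaining sel vs Lam1 i - sel i (vs i) (remaining sel vs Lam1 i)"

definition accepted :: "nat set \<Rightarrow> (nat \<Rightarrow> real) \<Rightarrow> (nat \<Rightarrow> real) \<Rightarrow> (nat \<Rightarrow> bool) \<Rightarrow> nat set" where
  "accepted L p ws c = {j \<in> L. c j \<and> ws j \<le> p j}"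

definition bought :: "nat \<Rightarrow> (nat \<Rightarrow> valuation \<Rightarrow> nat set \<Rightarrow> nat set) \<Rightarrow> nat set \<Rightarrow> (nat \<Rightarrow> real)
    \<Rightarrow> (nat \<Rightarrow> valuation) \<Rightarrow> (nat \<Rightarrow> real) \<Rightarrow> (nat \<Rightarrow> bool) \<Rightarrow> nat set" where
  "bought n sel L p vs ws c =
     accepted L p ws c - remaining sel vs (accepted L p ws c) n"

definition ALG_S where
  "ALG_S n k G F a A sel =
     (\<integral>\<^sup>+ \<omega>. ennreal (case \<omega> of (vs, ws, c) \<Rightarrow>
         \<Sum>j<k. if j \<notin> bought n sel (Lset n k G F a A) (price n G a A) vs ws c then ws j else 0)
       \<partial>mech_space n k G F a A)"

definition OPT_S where
  "OPT_S n k G F opt =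
     (\<integral>\<^sup>+ \<omega>. ennreal (case \<omega> of (vs, ws) \<Rightarrow>
         \<Sum>j\<in>{..<k} - (\<Union>i<n. opt vs ws i). ws j)
       \<partial>(PiM {..<n} G \<Otimes>\<^sub>M PiM {..<k} F))"

end

theory Submission
  imports Defs
begin

text \<open>Only the sellers' side matters. An item can leave its seller only if she was offered p_j
  and w_j \<le> p_j; offer and value are independent, so seller j loses in expectation at most
  q_j E[w_j; w_j \<le> p_j]. As w_j and the indicator of w_j \<le> p_j are oppositely ordered,
  E[w_j; w_j \<le> p_j] \<le> Pr[w_j \<le> p_j] E[w_j], so the loss is at most E[w_j]/2 when
  q_j Pr[w_j \<le> p_j] = 1/2. Hence 2 ALG^S \<ge> \<Sum>_j E[w_j], while OPT^S \<le> \<Sum>_j E[w_j] trivially.\<close>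

lemma (in sigma_finite_measure) distr_pair_snd:
  assumes "prob_space N"
  shows "distr (N \<Otimes>\<^sub>M M) M snd = M"
proof (intro measure_eqI)
  fix A assume A: "A \<in> sets (distr (N \<Otimes>\<^sub>M M) M snd)"
  then have "emeasure (distr (N \<Otimes>\<^sub>M M) M snd) A = emeasure (N \<Otimes>\<^sub>M M) (space N \<times> A)"
    by (auto simp add: emeasure_distr space_pair_measure dest: sets.sets_into_space
        intro!: arg_cong2[where f=emeasure])
  with A assms show "emeasure (distr (N \<Otimes>\<^sub>M M) M snd) A = emeasure M A"
    by (simp add: emeasure_pair_measure_Times prob_space.emeasure_space_1)
qed simp

lemma distr_pair_measure_snd:
  assumes "prob_space N" "sigma_finite_measure M" "f \<in> measurable M K"
  shows "distr (N \<Otimes>\<^sub>M M) K (\<lambda>(x, y). f y) = distr M K f"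
proof -
  have "distr (N \<Otimes>\<^sub>M M) K (\<lambda>(x, y). f y) = distr (N \<Otimes>\<^sub>M M) K (f \<circ> snd)"
    by (simp add: case_prod_unfold comp_def)
  also have "\<dots> = distr (distr (N \<Otimes>\<^sub>M M) M snd) K f"
    using assms(3) by (simp add: distr_distr)
  finally show ?thesis
    using assms by (simp add: sigma_finite_measure.distr_pair_snd)
qed

lemma distr_PiM_pair_component:
  assumes "\<And>i. i \<in> I \<Longrightarrow> prob_space (M i)" "\<And>i. i \<in> I \<Longrightarrow> prob_space (N i)" "i \<in> I"
  shows "distr (PiM I M \<Otimes>\<^sub>M PiM I N) (M i \<Otimes>\<^sub>M N i) (\<lambda>(x, y). (x i, y i)) = M i \<Otimes>\<^sub>M N i"
proof -
  have "distr (PiM I M) (M i) (\<lambda>x. x i) \<Otimes>\<^sub>M distr (PiM I N) (N i) (\<lambda>y. y i)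
      = distr (PiM I M \<Otimes>\<^sub>M PiM I N) (M i \<Otimes>\<^sub>M N i) (\<lambda>(x, y). (x i, y i))"
    using assms by (intro pair_measure_distr) (auto simp: distr_PiM_component prob_space_imp_sigma_finite)
  then show ?thesis
    using assms by (simp add: distr_PiM_component)
qed

lemma ennreal_sum_le_sum_ennreal: "ennreal (\<Sum>x\<in>S. f x) \<le> (\<Sum>x\<in>S. ennreal (f x))"
proof -
  have "ennreal (\<Sum>x\<in>S. f x) \<le> ennreal (\<Sum>x\<in>S. max (f x) 0)"
    by (intro ennreal_leI sum_mono) simp
  also have "\<dots> = (\<Sum>x\<in>S. ennreal (max (f x) 0))"
    by (rule sum_ennreal[symmetric]) simp
  finally show ?thesis
    by simp
qed

lemma (in prob_space) expectation_mult_indicator_atMost_le: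
  fixes X :: "'a \<Rightarrow> real"
  assumes X: "integrable M X"
  shows "expectation (\<lambda>x. X x * indicator {..p} (X x)) \<le> prob {x \<in> space M. X x \<le> p} * expectation X"
proof -
  let ?P = "prob {x \<in> space M. X x \<le> p}" and ?I = "\<lambda>x. indicator {..p} (X x) :: real"
  have X_meas [measurable]: "X \<in> borel_measurable M" using X by simp
  have int_I: "integrable M ?I"
    by (intro integrable_const_bound[where B=1]) (auto simp: indicator_def)
  have int_XI: "integrable M (\<lambda>x. X x * ?I x)"
    by (rule Bochner_Integration.integrable_bound[OF X]) (auto simp: indicator_def)
  have "expectation ?I = expectation (indicator {x \<in> space M. X x \<le> p})"
    by (intro Bochner_Integration.integral_cong) (auto simp: indicator_def)
  then have exp_I: "expectation ?I = ?P"
    by simp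
  have "0 \<le> (X x - p) * (?P - ?I x)" for x
    by (cases "X x \<le> p") (auto intro: mult_nonpos_nonpos)
  then have "0 \<le> expectation (\<lambda>x. (X x - p) * (?P - ?I x))"
    by simp
  moreover have "expectation (\<lambda>x. (X x - p) * (?P - ?I x))
      = ?P * expectation X - expectation (\<lambda>x. X x * ?I x) - p * (?P - expectation ?I)"
    using X int_I int_XI by (simp add: algebra_simps prob_space)
  ultimately show ?thesis
    by (simp add: exp_I)
qed

lemma measurable_unsold_value:
  fixes M :: "real measure" and b :: "bool pmf"
  assumes "sets M = sets borel"
  shows "(\<lambda>(x, c). ennreal (if offered \<and> c \<and> x \<le> p then 0 else x)) \<in> borel_measurable (M \<Otimes>\<^sub>M measure_pmf b)"
  unfolding measurable_cong_sets[OF sets_pair_measure_cong[OF assms sets_measure_pmf_count_space] refl]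
  by measurable

text \<open>With offered = False the item is never sold; this covers the items outside L.\<close>

lemma nn_integral_unsold_value_ge_half:
  fixes M :: "real measure" and b :: "bool pmf" and p :: real
  assumes M: "prob_space M" "sets M = sets borel"
    and nonneg: "AE x in M. 0 \<le> x" and int: "integrable M (\<lambda>x. x)"
    and half: "offered \<Longrightarrow> measure M {..p} * pmf b True = 1/2"
  shows "ennreal (integral\<^sup>L M (\<lambda>x. x) / 2)
           \<le> (\<integral>\<^sup>+ (x, c). ennreal (if offered \<and> c \<and> x \<le> p then 0 else x) \<partial>(M \<Otimes>\<^sub>M measure_pmf b))"
proof -
  interpret prob_space M by (fact M)
  define q where "q = (if offered then pmf b True else 0)"
  let ?u = "\<lambda>(x, c). ennreal (if offered \<and> c \<and> x \<le> p then 0 else x)"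
    and ?X\<^sub>p = "\<lambda>x. x * indicator {..p} x :: real"
  have space: "space M = UNIV"
    using sets_eq_imp_space_eq[OF M(2)] by simp
  have int_Xp: "integrable M ?X\<^sub>p"
    using M(2) int by (intro integrable_real_mult_indicator) auto
  have q: "0 \<le> q" "q \<le> 1"
    by (simp_all add: q_def pmf_le_1)
  have coin: "(\<integral>\<^sup>+ c. ennreal (if offered \<and> c \<and> x \<le> p then 0 else x) \<partial>measure_pmf b)
      = ennreal (x - q * ?X\<^sub>p x)" if "0 \<le> x" for x
    using that pmf_le_1[of b True]
    by (subst nn_integral_measure_pmf_support[of UNIV])
       (auto simp: q_def UNIV_bool pmf_False_conv_True algebra_simps simp flip: ennreal_mult ennreal_plus)
  from measure_pmf.nn_integral_fst[OF measurable_unsold_value[OF M(2)]]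
  have "integral\<^sup>N (M \<Otimes>\<^sub>M measure_pmf b) ?u = (\<integral>\<^sup>+ x. \<integral>\<^sup>+ c. ?u (x, c) \<partial>measure_pmf b \<partial>M)"
    by simp
  also have "\<dots> = (\<integral>\<^sup>+ x. ennreal (x - q * ?X\<^sub>p x) \<partial>M)"
    using nonneg by (intro nn_integral_cong_AE) (auto simp: coin)
  also have "\<dots> = ennreal (expectation (\<lambda>x. x) - q * expectation ?X\<^sub>p)"
  proof (subst nn_integral_eq_integral)
    show "AE x in M. 0 \<le> x - q * ?X\<^sub>p x"
      using nonneg by eventually_elim (use q in \<open>auto simp: indicator_def mult_left_le_one_le\<close>)
  qed (use int int_Xp in auto)
  finally have unsold: "integral\<^sup>N (M \<Otimes>\<^sub>M measure_pmf b) ?u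
      = ennreal (expectation (\<lambda>x. x) - q * expectation ?X\<^sub>p)" .
  have "q * expectation ?X\<^sub>p \<le> expectation (\<lambda>x. x) / 2"
  proof (cases offered)
    case True
    have "expectation ?X\<^sub>p \<le> prob {..p} * expectation (\<lambda>x. x)"
      using expectation_mult_indicator_atMost_le[OF int, of p] by (simp add: space atMost_def)
    then have "q * expectation ?X\<^sub>p \<le> q * (prob {..p} * expectation (\<lambda>x. x))"
      using q(1) by (rule mult_left_mono)
    also have "\<dots> = expectation (\<lambda>x. x) / 2"
      using half True by (simp add: q_def mult.assoc[symmetric] mult.commute[of "pmf b True"])
    finally show ?thesis .
  next
    case False
    then show ?thesis
      using nonneg by (simp add: q_def integral_nonneg_AE)
  qed
  then show ?thesis
    unfolding unsold by (intro ennreal_leI) simp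
qed

lemma measurable_mech_space_seller:
  assumes "j < k"
  shows "(\<lambda>(vs, ws, c). (ws j, c j))
    \<in> measurable (mech_space n k G F a A) (F j \<Otimes>\<^sub>M measure_pmf (bernoulli_pmf (offer_prob n G F a A j)))"
proof -
  have "j \<in> {..<k}" using assms by simp
  then show ?thesis unfolding mech_space_def by measurable
qed

lemma distr_mech_space_seller:
  assumes G: "\<forall>i<n. prob_space (G i)" and F: "\<forall>j<k. prob_space (F j)" and j: "j < k"
  shows "distr (mech_space n k G F a A) (F j \<Otimes>\<^sub>M measure_pmf (bernoulli_pmf (offer_prob n G F a A j)))
      (\<lambda>(vs, ws, c). (ws j, c j)) = F j \<Otimes>\<^sub>M measure_pmf (bernoulli_pmf (offer_prob n G F a A j))"
proof -
  let ?B = "\<lambda>j. measure_pmf (bernoulli_pmf (offer_prob n G F a A j))"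
  have "prob_space (PiM {..<k} F \<Otimes>\<^sub>M PiM {..<k} ?B)"
    using F by (intro prob_space_pair prob_space_PiM) (auto simp: prob_space_measure_pmf)
  moreover have "j \<in> {..<k}" using j by simp
  ultimately have "distr (mech_space n k G F a A) (F j \<Otimes>\<^sub>M ?B j) (\<lambda>(vs, ws, c). (ws j, c j))
      = distr (PiM {..<k} F \<Otimes>\<^sub>M PiM {..<k} ?B) (F j \<Otimes>\<^sub>M ?B j) (\<lambda>(ws, c). (ws j, c j))"
    unfolding mech_space_def using G
    by (intro distr_pair_measure_snd) (auto intro: prob_space_PiM prob_space_imp_sigma_finite)
  also have "\<dots> = F j \<Otimes>\<^sub>M ?B j"
    using F j by (intro distr_PiM_pair_component) (auto simp: prob_space_measure_pmf)
  finally show ?thesis .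
qed

lemma AE_mech_space_values_nonneg:
  assumes G_prob: "\<forall>i<n. prob_space (G i)"
    and F_prob: "\<forall>j<k. prob_space (F j)"
    and F_nonneg: "\<forall>j<k. AE x in F j. 0 \<le> x"
  shows "AE (vs, ws, c) in mech_space n k G F a A. \<forall>j<k. 0 \<le> ws j"
proof -
  have "AE \<omega> in mech_space n k G F a A. 0 \<le> fst (snd \<omega>) j" if j: "j < k" for j
  proof -
    let ?B = "measure_pmf (bernoulli_pmf (offer_prob n G F a A j))"
    have "AE z in distr (F j \<Otimes>\<^sub>M ?B) (F j) fst. 0 \<le> z"
      using F_nonneg j by (subst measure_pmf.distr_pair_fst) simp
    then have "AE z in F j \<Otimes>\<^sub>M ?B. 0 \<le> fst z"
      by (rule AE_distrD[rotated]) simp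
    then have "AE z in distr (mech_space n k G F a A) (F j \<Otimes>\<^sub>M ?B) (\<lambda>(vs, ws, c). (ws j, c j)). 0 \<le> fst z"
      by (subst distr_mech_space_seller[OF G_prob F_prob j])
    from AE_distrD[OF measurable_mech_space_seller[OF j] this]
    show ?thesis
      by (simp add: case_prod_unfold)
  qed
  then have "AE \<omega> in mech_space n k G F a A. \<forall>j\<in>{..<k}. 0 \<le> fst (snd \<omega>) j"
    by (intro AE_finite_allI) auto
  then show ?thesis
    by eventually_elim (auto simp: case_prod_unfold)
qed

lemma mech_space_unsold_value_ge_half:
  assumes G_prob: "\<forall>i<n. prob_space (G i)"
    and F_prob: "\<forall>j<k. prob_space (F j)"
    and F_borel: "\<forall>j<k. sets (F j) = sets borel"
    and F_nonneg: "\<forall>j<k. AE x in F j. 0 \<le> x"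
    and F_int: "\<forall>j<k. integrable (F j) (\<lambda>x. x)"
    and half: "\<forall>j\<in>Lset n k G F a A.
                 measure (mech_space n k G F a A)
                   {\<omega> \<in> space (mech_space n k G F a A).
                      case \<omega> of (vs, ws, c) \<Rightarrow> c j \<and> ws j \<le> price n G a A j} = 1/2"
    and j: "j < k"
  shows "ennreal (integral\<^sup>L (F j) (\<lambda>x. x) / 2)
    \<le> (\<integral>\<^sup>+ (vs, ws, c). ennreal (if j \<in> Lset n k G F a A \<and> c j \<and> ws j \<le> price n G a A j then 0 else ws j)
         \<partial>mech_space n k G F a A)"
proof -
  define M where "M = mech_space n k G F a A"
  define b where "b = bernoulli_pmf (offer_prob n G F a A j)"
  define p where "p = price n G a A j"
  define offered where "offered \<longleftrightarrow> j \<in> Lset n k G F a A"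
  define seller :: "(nat \<Rightarrow> valuation) \<times> (nat \<Rightarrow> real) \<times> (nat \<Rightarrow> bool) \<Rightarrow> real \<times> bool"
    where "seller = (\<lambda>(vs, ws, c). (ws j, c j))"
  have seller_meas: "seller \<in> measurable M (F j \<Otimes>\<^sub>M measure_pmf b)"
    unfolding M_def b_def seller_def using j by (rule measurable_mech_space_seller)
  have marginal: "distr M (F j \<Otimes>\<^sub>M measure_pmf b) seller = F j \<Otimes>\<^sub>M measure_pmf b"
    unfolding M_def b_def seller_def using G_prob F_prob j by (rule distr_mech_space_seller)
  have half_j: "measure (F j) {..p} * pmf b True = 1/2" if offered
  proof -
    have events: "{..p} \<in> sets (F j)" "{True} \<in> sets (measure_pmf b)"
      using F_borel j by auto
    have "measure (F j) {..p} * pmf b True = measure (F j \<Otimes>\<^sub>M measure_pmf b) ({..p} \<times> {True})"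
      using measure_pmf.emeasure_pair_measure_Times[OF events]
      by (simp add: measure_def enn2real_mult emeasure_pmf_single)
    also have "\<dots> = measure M (seller -` ({..p} \<times> {True}) \<inter> space M)"
      using events by (subst marginal[symmetric], intro measure_distr[OF seller_meas]) simp
    also have "seller -` ({..p} \<times> {True}) \<inter> space M
        = {\<omega> \<in> space M. case \<omega> of (vs, ws, c) \<Rightarrow> c j \<and> ws j \<le> p}"
      by (auto simp: seller_def)
    also have "measure M \<dots> = 1/2"
      using half that unfolding M_def p_def offered_def by simp
    finally show ?thesis .
  qed
  have "ennreal (integral\<^sup>L (F j) (\<lambda>x. x) / 2)
      \<le> (\<integral>\<^sup>+ (x, c). ennreal (if offered \<and> c \<and> x \<le> p then 0 else x) \<partial>(F j \<Otimes>\<^sub>M measure_pmf b))"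
    using F_prob F_borel F_nonneg F_int j half_j by (intro nn_integral_unsold_value_ge_half) auto
  also have "\<dots> = (\<integral>\<^sup>+ \<omega>. (\<lambda>(x, c). ennreal (if offered \<and> c \<and> x \<le> p then 0 else x)) (seller \<omega>) \<partial>M)"
    using F_borel j
    by (subst marginal[symmetric], intro nn_integral_distr[OF seller_meas]) (simp add: measurable_unsold_value)
  also have "\<dots> = (\<integral>\<^sup>+ (vs, ws, c). ennreal (if offered \<and> c j \<and> ws j \<le> p then 0 else ws j) \<partial>M)"
    by (intro nn_integral_cong) (auto simp: seller_def split: prod.splits)
  finally show ?thesis
    unfolding M_def p_def offered_def .
qed

lemma sum_unsold_le_kept_value:
  assumes "\<forall>j<k. 0 \<le> ws j"
  shows "(\<Sum>j<k. ennreal (if j \<in> L \<and> c j \<and> ws j \<le> p j then 0 else ws j))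
    \<le> ennreal (\<Sum>j<k. if j \<notin> bought n sel L p vs ws c then ws j else 0)"
proof -
  have "(\<Sum>j<k. ennreal (if j \<in> L \<and> c j \<and> ws j \<le> p j then 0 else ws j))
      \<le> (\<Sum>j<k. ennreal (if j \<notin> bought n sel L p vs ws c then ws j else 0))"
    by (intro sum_mono) (auto simp: bought_def accepted_def)
  also have "\<dots> = ennreal (\<Sum>j<k. if j \<notin> bought n sel L p vs ws c then ws j else 0)"
    using assms by (intro sum_ennreal) auto
  finally show ?thesis .
qed

lemma ALG_S_ge_half_expected_values:
  assumes G_prob: "\<forall>i<n. prob_space (G i)"
    and F_prob: "\<forall>j<k. prob_space (F j)"
    and F_borel: "\<forall>j<k. sets (F j) = sets borel"
    and F_nonneg: "\<forall>j<k. AE x in F j. 0 \<le> x"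
    and F_int: "\<forall>j<k. integrable (F j) (\<lambda>x. x)"
    and half: "\<forall>j\<in>Lset n k G F a A.
                 measure (mech_space n k G F a A)
                   {\<omega> \<in> space (mech_space n k G F a A).
                      case \<omega> of (vs, ws, c) \<Rightarrow> c j \<and> ws j \<le> price n G a A j} = 1/2"
  shows "ennreal (\<Sum>j<k. integral\<^sup>L (F j) (\<lambda>x. x)) \<le> 2 * ALG_S n k G F a A sel"
proof -
  define M where "M = mech_space n k G F a A"
  define L where "L = Lset n k G F a A"
  define p where "p = price n G a A"
  define E where "E j = integral\<^sup>L (F j) (\<lambda>x. x)" for j
  define unsold :: "nat \<Rightarrow> (nat \<Rightarrow> valuation) \<times> (nat \<Rightarrow> real) \<times> (nat \<Rightarrow> bool) \<Rightarrow> ennreal" where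
    "unsold j = (\<lambda>(vs, ws, c). ennreal (if j \<in> L \<and> c j \<and> ws j \<le> p j then 0 else ws j))" for j
  have E_nonneg: "0 \<le> E j" if "j < k" for j
    unfolding E_def using F_nonneg that by (intro integral_nonneg_AE) auto
  have "(\<Sum>j<k. ennreal (E j / 2)) \<le> (\<Sum>j<k. integral\<^sup>N M (unsold j))"
    using mech_space_unsold_value_ge_half[OF G_prob F_prob F_borel F_nonneg F_int half]
    by (intro sum_mono) (simp add: M_def L_def p_def E_def unsold_def)
  also have "\<dots> = (\<integral>\<^sup>+ \<omega>. (\<Sum>j<k. unsold j \<omega>) \<partial>M)"
  proof (rule nn_integral_sum[symmetric])
    fix j assume j: "j \<in> {..<k}"
    have "unsold j = (\<lambda>(x, c). ennreal (if j \<in> L \<and> c \<and> x \<le> p j then 0 else x)) \<circ> (\<lambda>(vs, ws, c). (ws j, c j))"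
      by (auto simp: unsold_def fun_eq_iff)
    then show "unsold j \<in> borel_measurable M"
      using j F_borel unfolding M_def
      by (auto intro!: measurable_comp[OF measurable_mech_space_seller measurable_unsold_value])
  qed
  also have "\<dots> \<le> ALG_S n k G F a A sel"
    unfolding ALG_S_def M_def[symmetric] L_def[symmetric] p_def[symmetric]
  proof (rule nn_integral_mono_AE)
    show "AE \<omega> in M. (\<Sum>j<k. unsold j \<omega>) \<le> ennreal (case \<omega> of (vs, ws, c) \<Rightarrow>
        \<Sum>j<k. if j \<notin> bought n sel L p vs ws c then ws j else 0)"
      using AE_mech_space_values_nonneg[OF G_prob F_prob F_nonneg, of a A] unfolding M_def[symmetric]
      by eventually_elim (auto simp: unsold_def intro: sum_unsold_le_kept_value)
  qed
  finally have "(\<Sum>j<k. ennreal (E j / 2)) \<le> ALG_S n k G F a A sel" .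
  moreover have "(\<Sum>j<k. ennreal (E j / 2)) = ennreal ((\<Sum>j<k. E j) / 2)"
    using E_nonneg by (subst sum_ennreal) (auto simp: sum_divide_distrib)
  ultimately have "2 * ennreal ((\<Sum>j<k. E j) / 2) \<le> 2 * ALG_S n k G F a A sel"
    by (intro mult_left_mono) simp_all
  moreover have "2 * ennreal ((\<Sum>j<k. E j) / 2) = ennreal (\<Sum>j<k. E j)"
    using ennreal_mult'[of 2 "(\<Sum>j<k. E j) / 2"] by simp
  ultimately show ?thesis
    unfolding E_def by simp
qed

lemma OPT_S_le_expected_values:
  fixes n k :: nat
  assumes G_prob: "\<forall>i<n. prob_space (G i)"
    and F_prob: "\<forall>j<k. prob_space (F j)"
    and F_borel: "\<forall>j<k. sets (F j) = sets borel"
    and F_nonneg: "\<forall>j<k. AE x in F j. 0 \<le> x"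
    and F_int: "\<forall>j<k. integrable (F j) (\<lambda>x. x)"
  shows "OPT_S n k G F opt \<le> ennreal (\<Sum>j<k. integral\<^sup>L (F j) (\<lambda>x. x))"
proof -
  let ?N = "PiM {..<n} G \<Otimes>\<^sub>M PiM {..<k} F"
  have value_meas: "(\<lambda>(vs, ws). ws j) \<in> measurable ?N (F j)" if "j < k" for j
  proof -
    have "j \<in> {..<k}" using that by simp
    then show ?thesis by measurable
  qed
  have marginal: "distr ?N (F j) (\<lambda>(vs, ws). ws j) = F j" if j: "j < k" for j
  proof -
    have "distr ?N (F j) (\<lambda>(vs, ws). ws j) = distr (PiM {..<k} F) (F j) (\<lambda>ws. ws j)"
      using G_prob F_prob j
      by (intro distr_pair_measure_snd) (auto intro: prob_space_PiM prob_space_imp_sigma_finite)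
    also have "\<dots> = F j"
      using F_prob j by (intro distr_PiM_component) auto
    finally show ?thesis .
  qed
  have ennreal_meas: "(\<lambda>x. ennreal x) \<in> borel_measurable (F j)" if "j < k" for j
    using F_borel that by (simp add: measurable_cong_sets[of "F j" borel])
  have expected_value: "(\<integral>\<^sup>+ (vs, ws). ennreal (ws j) \<partial>?N) = ennreal (integral\<^sup>L (F j) (\<lambda>x. x))"
    if j: "j < k" for j
  proof -
    have "(\<integral>\<^sup>+ (vs, ws). ennreal (ws j) \<partial>?N) = (\<integral>\<^sup>+ x. ennreal x \<partial>distr ?N (F j) (\<lambda>(vs, ws). ws j))"
      using ennreal_meas[OF j] by (subst nn_integral_distr[OF value_meas[OF j]]) (auto simp: case_prod_unfold)
    also have "\<dots> = ennreal (integral\<^sup>L (F j) (\<lambda>x. x))"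
      using F_int F_nonneg j by (simp add: marginal nn_integral_eq_integral)
    finally show ?thesis .
  qed
  have "OPT_S n k G F opt \<le> (\<integral>\<^sup>+ (vs, ws). (\<Sum>j<k. ennreal (ws j)) \<partial>?N)"
    unfolding OPT_S_def
  proof (intro nn_integral_mono, clarify)
    fix vs ws
    have "ennreal (\<Sum>j\<in>{..<k} - (\<Union>i<n. opt vs ws i). ws j)
        \<le> (\<Sum>j\<in>{..<k} - (\<Union>i<n. opt vs ws i). ennreal (ws j))"
      by (rule ennreal_sum_le_sum_ennreal)
    also have "\<dots> \<le> (\<Sum>j<k. ennreal (ws j))"
      by (rule sum_mono2) auto
    finally show "ennreal (\<Sum>j\<in>{..<k} - (\<Union>i<n. opt vs ws i). ws j) \<le> (\<Sum>j<k. ennreal (ws j))" .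
  qed
  also have "\<dots> = (\<Sum>j<k. \<integral>\<^sup>+ (vs, ws). ennreal (ws j) \<partial>?N)"
    using measurable_compose[OF value_meas ennreal_meas]
    by (subst nn_integral_sum[symmetric]) (auto simp: case_prod_unfold)
  also have "\<dots> = ennreal (\<Sum>j<k. integral\<^sup>L (F j) (\<lambda>x. x))"
    using F_nonneg by (simp add: expected_value) (intro sum_ennreal integral_nonneg_AE, simp)
  finally show ?thesis .
qed

theorem lemma1:
  fixes n k :: nat
    and G :: "nat \<Rightarrow> valuation measure"
    and F :: "nat \<Rightarrow> real measure"
    and a :: "valuation \<Rightarrow> nat set \<Rightarrow> nat set \<Rightarrow> real"
    and A :: "(nat \<Rightarrow> valuation) \<Rightarrow> nat \<Rightarrow> nat set"
    and sel :: "nat \<Rightarrow> valuation \<Rightarrow> nat set \<Rightarrow> nat set"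
    and opt :: "(nat \<Rightarrow> valuation) \<Rightarrow> (nat \<Rightarrow> real) \<Rightarrow> nat \<Rightarrow> nat set"
  assumes G_prob: "\<forall>i<n. prob_space (G i)"
    and G_xos: "\<forall>i<n. AE v in G i. xos k v"
    and F_prob: "\<forall>j<k. prob_space (F j)"
    and F_borel: "\<forall>j<k. sets (F j) = sets borel"
    and F_nonneg: "\<forall>j<k. AE x in F j. 0 \<le> x"
    and F_int: "\<forall>j<k. integrable (F j) (\<lambda>x. x)"
    and a_additive: "\<forall>v T S. xos k v \<longrightarrow> T \<subseteq> {..<k} \<longrightarrow> S \<subseteq> {..<k} \<longrightarrow>
                       a v T S = (\<Sum>j\<in>S. a v T {j})"
    and a_nonneg: "\<forall>v T j. xos k v \<longrightarrow> T \<subseteq> {..<k} \<longrightarrow> j < k \<longrightarrow> 0 \<le> a v T {j}"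
    and a_T: "\<forall>v T. xos k v \<longrightarrow> T \<subseteq> {..<k} \<longrightarrow> a v T T = v T"
    and a_le: "\<forall>v T S. xos k v \<longrightarrow> T \<subseteq> {..<k} \<longrightarrow> S \<subseteq> {..<k} \<longrightarrow> a v T S \<le> v S"
    and A_alloc: "\<forall>vs. is_alloc n k (A vs)"
    and sel_best: "\<forall>i<n. \<forall>v Lam. Lam \<subseteq> Lset n k G F a A \<longrightarrow>
                     sel i v Lam \<subseteq> Lam \<and>
                     (\<forall>B \<subseteq> Lam. v B - (\<Sum>j\<in>B. price n G a A j)
                         \<le> v (sel i v Lam) - (\<Sum>j\<in>sel i v Lam. price n G a A j))"
    and opt_best: "\<forall>vs ws. opt_alloc n k vs ws (opt vs ws)"
    and half: "\<forall>j\<in>Lset n k G F a A.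
                 measure (mech_space n k G F a A)
                   {\<omega> \<in> space (mech_space n k G F a A).
                      case \<omega> of (vs, ws, c) \<Rightarrow> c j \<and> ws j \<le> price n G a A j} = 1/2"
  shows "2 * ALG_S n k G F a A sel \<ge> ennreal (\<Sum>j<k. integral\<^sup>L (F j) (\<lambda>x. x))
       \<and> ennreal (\<Sum>j<k. integral\<^sup>L (F j) (\<lambda>x. x)) \<ge> OPT_S n k G F opt"
proof
  show "ennreal (\<Sum>j<k. integral\<^sup>L (F j) (\<lambda>x. x)) \<le> 2 * ALG_S n k G F a A sel"
    by (rule ALG_S_ge_half_expected_values[OF G_prob F_prob F_borel F_nonneg F_int half])
  show "OPT_S n k G F opt \<le> ennreal (\<Sum>j<k. integral\<^sup>L (F j) (\<lambda>x. x))"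
    by (rule OPT_S_le_expected_values[OF G_prob F_prob F_borel F_nonneg F_int])
qed

end
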